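(* Let $\epsilon>0$ be a constant. Let $k$ and $U$ be arbitrary parameters with $U\ge k^{1+\epsilon}$, let $p>U$ be a prime and $m\le U$ a positive integer, and let $h(x)=((\sigma x+\tau)\bmod p)\bmod m$ with $\sigma,\tau\in[p]$ chosen independently and uniformly at random. Then there exist a set $X\subseteq[U]$ of $k$ keys, a key $x\notin X$ and buckets $a,b\in[m]$ such that, for $y,z\in X$ chosen independently and uniformly at random, $$\Pr\big(h(y)=h(z)=b\;\big|\;h(x)=a\big)\ge\frac{1}{mk}\exp\!\left(\Omega\!\left(\sqrt{\min\left(\tfrac{\log k}{\log\log k},\tfrac{\log U}{\log^2\log U}\right)}\right)\right).$$
   Context: $[N]=\{0,1,\dots,N-1\}$. The probability is over $\sigma,\tau,y,z$. The constant in $\Omega(\cdot)$ may depend on $\epsilon$. *)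

theory Defs
  imports "HOL-Computational_Algebra.Primes" Complex_Main
begin

definition hash :: "nat \<Rightarrow> nat \<Rightarrow> nat \<Rightarrow> nat \<Rightarrow> nat \<Rightarrow> nat" where
  "hash p m \<sigma> \<tau> x = ((\<sigma> * x + \<tau>) mod p) mod m"

text \<open>Conditional probability Pr(h(y) = h(z) = b | h(x) = a), where sigma, tau are
  uniform in [p] and y, z uniform in X, all independent. Since the distribution is uniform
  on the finite product space [p] x [p] x X x X, the probability is a ratio of counts.\<close>
definition cond_prob :: "nat \<Rightarrow> nat \<Rightarrow> nat set \<Rightarrow> nat \<Rightarrow> nat \<Rightarrow> nat \<Rightarrow> real" where
  "cond_prob p m X x a b =
     real (card {(\<sigma>, \<tau>, y, z). \<sigma> < p \<and> \<tau> < p \<and> y \<in> X \<and> z \<in> X \<and>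
                 hash p m \<sigma> \<tau> x = a \<and> hash p m \<sigma> \<tau> y = b \<and> hash p m \<sigma> \<tau> z = b})
   / real (card {(\<sigma>, \<tau>, y, z). \<sigma> < p \<and> \<tau> < p \<and> y \<in> X \<and> z \<in> X \<and>
                 hash p m \<sigma> \<tau> x = a})"

end

theory Submission
  imports Defs "HOL-Number_Theory.Cong"
begin

text \<open>
  Take \<open>x = 0\<close> and \<open>a = b = 0\<close>. If \<open>\<sigma> gcd(y, z) mod p\<close> and \<open>\<tau>\<close> are small multiples of \<open>m\<close>,
  then none of \<open>\<sigma> w + \<tau>\<close>, \<open>w \<in> {0, y, z}\<close>, wraps around modulo \<open>p\<close>, so all three keys land in
  bucket \<open>0\<close>. Counting such \<open>(\<sigma>, \<tau>)\<close> bounds the conditional probability from below by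
  \<open>1 / (8 m k\<^sup>2)\<close> times the sum of \<open>gcd(y, z) / max(y, z)\<close> over all pairs of keys.

  As keys we take the products of \<open>r\<close> out of \<open>n\<close> primes up to \<open>T\<close>. Each key shares all but \<open>j\<close>
  primes with \<open>(r choose j) ((n - r) choose j) \<ge> (2T)^j\<close> other keys, and for such a pair the ratio
  \<open>gcd / max\<close> is at least \<open>T^-j\<close>; this gains a factor \<open>2^j\<close> over \<open>1 / (m k)\<close>.

  By Chebyshev's bound \<open>T = O(n ln n)\<close> suffices. With \<open>\<eta> = min \<epsilon> 1 / 8\<close>,
  \<open>r \<approx> min (ln k / 8) (\<eta> ln U / ln ln U)\<close> and \<open>n\<close> such that \<open>n choose r \<approx> k\<close>, all keys stay
  below \<open>U\<close>, and \<open>j \<approx> sqrt (r / ln n)\<close> is of order \<open>sqrt (min (ln k / ln ln k) (ln U / (ln ln U)\<^sup>2))\<close>.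
\<close>

section \<open>Chebyshev's lower bound for the number of primes\<close>

lemma multiplicity_fact:
  fixes p K n :: nat
  assumes p: "prime p" and n: "n < p ^ Suc K"
  shows "multiplicity p (fact n :: nat) = (\<Sum>i=1..K. n div p ^ i)"
  using n
proof (induction n)
  case 0
  then show ?case by simp
next
  case (Suc n)
  have p1: "1 < p" using p prime_gt_1_nat by blast
  have "p ^ multiplicity p (Suc n) \<le> Suc n"
    by (intro dvd_imp_le multiplicity_dvd) simp
  then have "multiplicity p (Suc n) \<le> K"
    using Suc.prems p1 power_less_imp_less_exp by (meson le_less_trans less_Suc_eq_le)
  moreover have "p ^ i dvd Suc n \<longleftrightarrow> i \<le> multiplicity p (Suc n)" for i
    using p1 power_dvd_iff_le_multiplicity[of "Suc n" p i] by simp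
  ultimately have "{i \<in> {1..K}. p ^ i dvd Suc n} = {1..multiplicity p (Suc n)}"
    by fastforce
  then have v: "multiplicity p (Suc n) = (\<Sum>i=1..K. if p ^ i dvd Suc n then 1 else 0)"
    using sum.inter_filter[of "{1..K}" "\<lambda>_. 1::nat" "\<lambda>i. p ^ i dvd Suc n"] by simp
  have "multiplicity p (fact (Suc n) :: nat) = multiplicity p (Suc n * fact n)"
    by (simp only: fact_Suc of_nat_id)
  also have "\<dots> = multiplicity p (Suc n) + multiplicity p (fact n :: nat)"
    using p by (intro prime_elem_multiplicity_mult_distrib) auto
  also have "\<dots> = (\<Sum>i=1..K. (if p ^ i dvd Suc n then 1 else 0) + n div p ^ i)"
    using v Suc by (simp add: sum.distrib)
  also have "\<dots> = (\<Sum>i=1..K. Suc n div p ^ i)"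
    by (rule sum.cong) (auto simp: div_Suc mod_eq_0_iff_dvd)
  finally show ?case .
qed

lemma double_div_le: "2 * N div d \<le> 2 * (N div d) + 1" for N d :: nat
proof (cases "d = 0")
  case False
  have "N < (N div d + 1) * d"
    using False dividend_less_div_times[of d N] by (simp add: algebra_simps)
  then have "2 * N < (2 * (N div d) + 2) * d"
    by (simp add: algebra_simps)
  then have "2 * N div d < 2 * (N div d) + 2"
    using False div_less_iff_less_mult by blast
  then show ?thesis
    by simp
qed simp

text \<open>By Legendre's formula the exponent of \<open>p\<close> in \<open>(2N choose N)\<close> is the number of \<open>i \<ge> 1\<close>
  with \<open>\<lfloor>2N/p^i\<rfloor> = 2\<lfloor>N/p^i\<rfloor> + 1\<close>, and such an \<open>i\<close> satisfies \<open>p^i \<le> 2N\<close>.\<close>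
lemma prime_power_central_binomial_le:
  fixes p N :: nat
  assumes p: "prime p" and N: "1 \<le> N"
  shows "p ^ multiplicity p (2 * N choose N) \<le> 2 * N"
proof -
  have p1: "1 < p" using p prime_gt_1_nat by blast
  obtain K where K: "p ^ K \<le> 2 * N" "2 * N < p ^ Suc K"
    using ex_power_ivl1[of p "2 * N"] p1 N by auto
  have "fact (2 * N) = fact N * fact N * (2 * N choose N)"
    using binomial_fact_lemma[of N "2 * N"] by (simp add: mult_2)
  then have "multiplicity p (fact (2 * N) :: nat)
      = 2 * multiplicity p (fact N :: nat) + multiplicity p (2 * N choose N)"
    using p by (simp add: prime_elem_multiplicity_mult_distrib)
  then have "multiplicity p (2 * N choose N) = (\<Sum>i=1..K. 2 * N div p ^ i) - 2 * (\<Sum>i=1..K. N div p ^ i)"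
    using multiplicity_fact[OF p K(2)] multiplicity_fact[of p N K] p K(2) by simp
  also have "\<dots> \<le> K"
  proof -
    have "(\<Sum>i=1..K. 2 * N div p ^ i) \<le> (\<Sum>i=1..K. 2 * (N div p ^ i)) + (\<Sum>i=1..K. 1)"
      unfolding sum.distrib[symmetric] by (intro sum_mono double_div_le)
    moreover have "(\<Sum>i=1..K. 2 * (N div p ^ i)) = 2 * (\<Sum>i=1..K. N div p ^ i)"
      by (simp add: sum_distrib_left)
    ultimately show ?thesis by simp
  qed
  finally have "multiplicity p (2 * N choose N) \<le> K" .
  then have "p ^ multiplicity p (2 * N choose N) \<le> p ^ K"
    using p1 by (intro power_increasing) auto
  then show ?thesis
    using K(1) by linarith
qed

lemma central_binomial_le_pow_card_primes:
  fixes N :: nat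
  assumes "1 \<le> N"
  shows "(2 * N choose N) \<le> (2 * N) ^ card {p. prime p \<and> p \<le> 2 * N}"
proof -
  let ?C = "2 * N choose N"
  have "prime_factors ?C \<subseteq> {p. prime p \<and> p \<le> 2 * N}"
  proof
    fix p assume p: "p \<in> prime_factors ?C"
    have "?C dvd fact (2 * N)"
      using binomial_fact_lemma[of N "2 * N"] by (metis dvd_triv_right le_add2 mult_2)
    then have "p dvd fact (2 * N)"
      using p dvd_trans by auto
    then show "p \<in> {p. prime p \<and> p \<le> 2 * N}"
      using p prime_dvd_fact_iff by auto
  qed
  moreover have "finite {p. prime p \<and> p \<le> 2 * N}"
    by (rule finite_subset[of _ "{..2 * N}"]) auto
  ultimately have "card (prime_factors ?C) \<le> card {p. prime p \<and> p \<le> 2 * N}"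
    by (rule card_mono[rotated])
  have "?C = (\<Prod>p\<in>prime_factors ?C. p ^ multiplicity p ?C)"
    using prod_prime_factors[of ?C] by simp
  also have "\<dots> \<le> (\<Prod>p\<in>prime_factors ?C. 2 * N)"
    by (rule prod_mono) (use prime_power_central_binomial_le assms in auto)
  also have "\<dots> \<le> (2 * N) ^ card {p. prime p \<and> p \<le> 2 * N}"
    using assms \<open>card (prime_factors ?C) \<le> _\<close> by (simp only: prod_constant) (rule power_increasing; simp)
  finally show ?thesis .
qed

lemma chebyshev_lower_bound:
  fixes N :: nat
  assumes "1 \<le> N"
  shows "real N * ln 2 \<le> real (card {p. prime p \<and> p \<le> 2 * N}) * ln (2 * real N)"
proof -
  have "(2::real) ^ N = (real (2 * N) / real N) ^ N"
    using assms by simp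
  also have "\<dots> \<le> real (2 * N choose N)"
    by (rule binomial_ge_n_over_k_pow_k) simp
  also have "\<dots> \<le> (2 * real N) ^ card {p. prime p \<and> p \<le> 2 * N}"
    using central_binomial_le_pow_card_primes[OF assms] by (metis of_nat_le_iff of_nat_mult of_nat_numeral of_nat_power)
  finally have "ln ((2::real) ^ N) \<le> ln ((2 * real N) ^ card {p. prime p \<and> p \<le> 2 * N})"
    using assms by (subst ln_le_cancel_iff) auto
  then show ?thesis
    by (simp only: ln_realpow)
qed

lemma ln_2_ge_half: "1 / 2 \<le> ln (2::real)"
  using ln_le_minus_one[of "1 / 2 :: real"] by (simp add: ln_div)

lemma two_le_ln:
  fixes x :: real
  assumes "16 \<le> x"
  shows "2 \<le> ln x"
proof -
  have "ln (16::real) = 4 * ln 2"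
    using ln_realpow[of 2 4] by simp
  moreover have "ln 16 \<le> ln x"
    using assms by simp
  ultimately show ?thesis
    using ln_2_ge_half by linarith
qed

text \<open>Chebyshev's bound with \<open>N = 8 n \<lceil>ln n\<rceil>\<close>: here \<open>N ln 2 \<ge> 4 n ln n\<close> while \<open>ln (2 N) \<le> 4 ln n\<close>.\<close>
lemma card_primes_ge:
  fixes n :: nat
  assumes n: "16 \<le> n"
  shows "n \<le> card {q. prime q \<and> q \<le> 16 * n * nat \<lceil>ln (real n)\<rceil>}"
proof -
  define c where "c = nat \<lceil>ln (real n)\<rceil>"
  define N where "N = 8 * n * c"
  have ln_n: "2 \<le> ln (real n)"
    using n by (intro two_le_ln) simp
  have c: "ln (real n) \<le> real c" "real c \<le> ln (real n) + 1" "0 < c"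
    unfolding c_def using ln_n by linarith+
  have "4 * real n * ln (real n) \<le> 4 * real n * real c"
    using c(1) by (intro mult_left_mono) auto
  also have "\<dots> = real N * (1 / 2)"
    unfolding N_def by simp
  also have "\<dots> \<le> real N * ln 2"
    using ln_2_ge_half by (intro mult_left_mono) auto
  also have "\<dots> \<le> real (card {q. prime q \<and> q \<le> 2 * N}) * ln (2 * real N)"
    using c(3) n unfolding N_def by (intro chebyshev_lower_bound) simp
  also have "\<dots> \<le> real (card {q. prime q \<and> q \<le> 2 * N}) * (4 * ln (real n))"
  proof -
    have "ln (real c) \<le> ln (ln (real n) + 1)"
      using c by simp
    also have "\<dots> \<le> ln (real n)"
      using ln_n ln_add_one_self_le_self[of "ln (real n)"] by (simp add: add.commute)
    finally have "ln (real c) \<le> ln (real n)" .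
    moreover have "ln (16::real) \<le> 4"
      using ln_realpow[of 2 4] ln_2_less_1 by simp
    moreover have "ln (2 * real N) = ln 16 + ln (real n) + ln (real c)"
      using n c(3) unfolding N_def by (simp add: ln_mult)
    ultimately show ?thesis
      using ln_n by (intro mult_left_mono) auto
  qed
  finally have "real n * (4 * ln (real n)) \<le> real (card {q. prime q \<and> q \<le> 2 * N}) * (4 * ln (real n))"
    by (simp add: mult_ac)
  then have "n \<le> card {q. prime q \<and> q \<le> 2 * N}"
    using ln_n by (simp add: mult_le_cancel_right)
  then show ?thesis
    unfolding N_def c_def by (simp add: mult_ac)
qed

lemma exists_prime_bound:
  fixes n :: nat
  assumes n: "16 \<le> n"
  shows "\<exists>T. 0 < T \<and> n \<le> card {q. prime q \<and> q \<le> T} \<and> real T \<le> 32 * real n * ln (real n)"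
proof -
  define c where "c = nat \<lceil>ln (real n)\<rceil>"
  have ln_n: "2 \<le> ln (real n)"
    using n by (intro two_le_ln) simp
  then have c: "real c \<le> 2 * ln (real n)" "0 < c"
    unfolding c_def by linarith+
  have "real (16 * n * c) = 16 * real n * real c"
    by simp
  also have "\<dots> \<le> 16 * real n * (2 * ln (real n))"
    using c by (intro mult_left_mono) auto
  finally have "real (16 * n * c) \<le> 32 * real n * ln (real n)"
    by simp
  moreover have "0 < 16 * n * c"
    using n c by simp
  ultimately show ?thesis
    using card_primes_ge[OF n] unfolding c_def by blast
qed

section \<open>Three keys hashing to the same bucket\<close>

definition gcd_max_ratio :: "nat \<Rightarrow> nat \<Rightarrow> real" where
  "gcd_max_ratio y z = real (gcd y z) / real (max y z)"

lemma gcd_max_ratio_nonneg [simp]: "0 \<le> gcd_max_ratio y z"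
  by (simp add: gcd_max_ratio_def)

lemma card_double_multiples_less_ge:
  fixes b p :: nat
  assumes "0 < b"
  shows "real p / (2 * real b) \<le> real (card {j. 2 * j * b < p})"
proof (cases "p = 0")
  case False
  define q where "q = (p - 1) div (2 * b)"
  have "2 * j * b < p \<longleftrightarrow> j \<le> q" for j
    using False assms unfolding q_def by (auto simp: less_eq_div_iff_mult_less_eq mult_ac)
  then have "{j. 2 * j * b < p} = {..q}"
    by auto
  moreover have "p \<le> 2 * b * (q + 1)"
    using False assms dividend_less_times_div[of "2 * b" "p - 1"] unfolding q_def by simp
  then have "real p \<le> 2 * real b * (real q + 1)"
    by (metis of_nat_le_iff of_nat_mult of_nat_numeral of_nat_Suc Suc_eq_plus1 add.commute)
  ultimately show ?thesis
    using assms by (simp add: divide_le_eq algebra_simps)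
qed simp

lemma bij_betw_mult_mod_prime:
  fixes p g :: nat
  assumes p: "prime p" and g: "0 < g" "g < p"
  shows "bij_betw (\<lambda>s. s * g mod p) {..<p} {..<p}"
proof -
  have "coprime g p"
    using p g by (metis coprime_commute prime_imp_coprime dvd_imp_le not_le)
  then have inj: "inj_on (\<lambda>s. s * g mod p) {..<p}"
    by (auto intro!: inj_onI simp: cong_def[symmetric] cong_mult_rcancel_nat cong_less_modulus_unique_nat)
  moreover have "(\<lambda>s. s * g mod p) ` {..<p} = {..<p}"
    using inj p prime_gt_0_nat by (intro endo_inj_surj) auto
  ultimately show ?thesis
    unfolding bij_betw_def ..
qed

lemma card_mult_mod_prime_small_multiples_ge:
  fixes p g m M :: nat
  assumes p: "prime p" and g: "0 < g" "g < p" and "0 < m" "0 < M"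
  shows "real p / (2 * real (m * M))
    \<le> real (card {\<sigma>. \<sigma> < p \<and> (\<exists>j. \<sigma> * g mod p = j * m \<and> 2 * j * (m * M) < p)})"
proof -
  let ?F = "\<lambda>s. s * g mod p"
  define J where "J = {j. 2 * j * (m * M) < p}"
  define E where "E = (\<lambda>j. j * m) ` J"
  have bij: "bij_betw ?F {..<p} {..<p}"
    by (rule bij_betw_mult_mod_prime[OF p g])
  have "E \<subseteq> {..<p}"
  proof
    fix e assume "e \<in> E"
    then obtain j where j: "e = j * m" "2 * j * (m * M) < p"
      unfolding E_def J_def by auto
    have "j * m \<le> j * m * (2 * M)"
      using \<open>0 < M\<close> by simp
    also have "\<dots> = 2 * j * (m * M)"
      by (simp add: mult_ac)
    finally have "j * m < p"
      using j(2) by linarith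
    then show "e \<in> {..<p}"
      using j(1) by simp
  qed
  then have "E \<subseteq> ?F ` {\<sigma>. \<sigma> < p \<and> ?F \<sigma> \<in> E}"
    using bij unfolding bij_betw_def by auto
  then have "bij_betw ?F {\<sigma>. \<sigma> < p \<and> ?F \<sigma> \<in> E} E"
    by (intro bij_betw_subset[OF bij]) auto
  then have "card {\<sigma>. \<sigma> < p \<and> ?F \<sigma> \<in> E} = card E"
    by (rule bij_betw_same_card)
  also have "\<dots> = card J"
    unfolding E_def using \<open>0 < m\<close> by (intro card_image) (auto simp: inj_on_def)
  finally have "card {\<sigma>. \<sigma> < p \<and> ?F \<sigma> \<in> E} = card J" .
  moreover have "real p / (2 * real (m * M)) \<le> real (card J)"
    unfolding J_def using assms by (intro card_double_multiples_less_ge) simp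
  moreover have "{\<sigma>. \<sigma> < p \<and> ?F \<sigma> \<in> E} = {\<sigma>. \<sigma> < p \<and> (\<exists>j. ?F \<sigma> = j * m \<and> 2 * j * (m * M) < p)}"
    unfolding E_def J_def by auto
  ultimately show ?thesis
    by simp
qed

text \<open>No reduction modulo \<open>p\<close> happens in \<open>\<sigma> w + \<tau>\<close>, so its residue is a multiple of \<open>m\<close>.\<close>
lemma hash_eq_0_if_small_multiples:
  fixes p m \<sigma> \<tau> g w a b M :: nat
  assumes \<sigma>: "\<sigma> * g mod p = a * m" "2 * a * (m * M) < p" and \<tau>: "\<tau> = b * m" "2 * b * m < p"
    and w: "g dvd w" "w \<le> g * M" "0 < g"
  shows "hash p m \<sigma> \<tau> w = 0"
proof -
  obtain u where u: "w = g * u"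
    using w(1) by (rule dvdE)
  then have "u \<le> M"
    using w by simp
  then have "2 * (a * m * u) \<le> 2 * a * (m * M)"
    using mult_le_mono2[of u M "2 * a * m"] by (simp add: mult_ac)
  then have small: "2 * (a * m * u) < p"
    using \<sigma>(2) by linarith
  have "\<sigma> * w mod p = (\<sigma> * g mod p) * u mod p"
    unfolding u by (simp add: mod_mult_left_eq mult.assoc)
  also have "\<dots> = a * m * u"
    using \<sigma>(1) small by simp
  finally have "(\<sigma> * w + \<tau>) mod p = (a * m * u + b * m) mod p"
    using \<tau>(1) by (metis mod_add_left_eq)
  also have "\<dots> = a * m * u + b * m"
    using small \<tau>(2) by simp
  also have "\<dots> = m * (a * u + b)"
    by (simp add: algebra_simps)
  finally show ?thesis
    unfolding hash_def by simp
qed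

text \<open>Write \<open>g = gcd y z\<close> and \<open>M = max y z div g\<close>. The points \<open>0, y, z\<close> are multiples of \<open>g\<close>
  up to \<open>g M\<close>, so they all hash to \<open>0\<close> as soon as \<open>\<sigma> g mod p\<close> and \<open>\<tau>\<close> are multiples of \<open>m\<close>
  below \<open>p / (2M)\<close> and \<open>p / 2\<close>.\<close>
lemma card_common_zero_hash_ge:
  fixes p m y z :: nat
  assumes p: "prime p" and m: "0 < m" and y: "0 < y" "y < p" and z: "0 < z" "z < p"
  shows "real p ^ 2 / (4 * real m ^ 2) * gcd_max_ratio y z
    \<le> real (card {(\<sigma>, \<tau>). \<sigma> < p \<and> \<tau> < p \<and>
                  hash p m \<sigma> \<tau> 0 = 0 \<and> hash p m \<sigma> \<tau> y = 0 \<and> hash p m \<sigma> \<tau> z = 0})"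
proof -
  define C where "C = {(\<sigma>, \<tau>). \<sigma> < p \<and> \<tau> < p \<and>
                  hash p m \<sigma> \<tau> 0 = 0 \<and> hash p m \<sigma> \<tau> y = 0 \<and> hash p m \<sigma> \<tau> z = 0}"
  define g where "g = gcd y z"
  define M where "M = max y z div g"
  define I where "I = {i. 2 * i * m < p}"
  define \<Sigma> where "\<Sigma> = {\<sigma>. \<sigma> < p \<and> (\<exists>j. \<sigma> * g mod p = j * m \<and> 2 * j * (m * M) < p)}"
  have "gcd y z \<le> y"
    using y by (intro gcd_le1_nat) simp
  then have g: "0 < g" "g < p"
    unfolding g_def using y by (simp, linarith)
  have gM: "max y z = g * M"
    unfolding M_def g_def by (simp add: max_def)
  then have "0 < M"
    using y by (cases "M = 0") auto
  have "\<Sigma> \<times> (\<lambda>i. i * m) ` I \<subseteq> C"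
  proof safe
    fix \<sigma> i assume "\<sigma> \<in> \<Sigma>" "i \<in> I"
    then have "hash p m \<sigma> (i * m) w = 0" if "w \<in> {0, y, z}" for w
      using that g gM unfolding \<Sigma>_def I_def g_def
      by (auto intro!: hash_eq_0_if_small_multiples[where M = M])
    moreover have "i * m < p"
      using \<open>i \<in> I\<close> unfolding I_def by simp
    ultimately show "(\<sigma>, i * m) \<in> C"
      using \<open>\<sigma> \<in> \<Sigma>\<close> unfolding C_def \<Sigma>_def by simp
  qed
  moreover have "finite C"
    by (rule finite_subset[of _ "{..<p} \<times> {..<p}"]) (auto simp: C_def)
  ultimately have "card \<Sigma> * card ((\<lambda>i. i * m) ` I) \<le> card C"
    unfolding card_cartesian_product[symmetric] by (rule card_mono[rotated])
  moreover have "card ((\<lambda>i. i * m) ` I) = card I"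
    using m by (intro card_image) (auto simp: inj_on_def)
  ultimately have "real (card \<Sigma>) * real (card I) \<le> real (card C)"
    by (simp only: of_nat_mult[symmetric] of_nat_le_iff)
  moreover have "real p / (2 * real (m * M)) * (real p / (2 * real m)) \<le> real (card \<Sigma>) * real (card I)"
    unfolding \<Sigma>_def I_def using m \<open>0 < M\<close>
    by (intro mult_mono card_mult_mod_prime_small_multiples_ge[OF p g] card_double_multiples_less_ge) auto
  moreover have "gcd_max_ratio y z = 1 / real M"
    unfolding gcd_max_ratio_def g_def[symmetric] gM using g by simp
  ultimately show ?thesis
    unfolding C_def[symmetric] by (simp add: power2_eq_square mult_ac)
qed

lemma card_quadruples_eq_sum:
  fixes p :: nat and X :: "nat set"
  assumes "finite X"
  shows "card {(\<sigma>, \<tau>, y, z). \<sigma> < p \<and> \<tau> < p \<and> y \<in> X \<and> z \<in> X \<and> Q \<sigma> \<tau> y z}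
    = (\<Sum>y\<in>X. \<Sum>z\<in>X. card {(\<sigma>, \<tau>). \<sigma> < p \<and> \<tau> < p \<and> Q \<sigma> \<tau> y z})"
proof -
  define A where "A y z = {(\<sigma>, \<tau>). \<sigma> < p \<and> \<tau> < p \<and> Q \<sigma> \<tau> y z}" for y z
  have fin: "finite (A y z)" for y z
    by (rule finite_subset[of _ "{..<p} \<times> {..<p}"]) (auto simp: A_def)
  have "{(\<sigma>, \<tau>, y, z). \<sigma> < p \<and> \<tau> < p \<and> y \<in> X \<and> z \<in> X \<and> Q \<sigma> \<tau> y z}
      = (\<lambda>((y, z), \<sigma>, \<tau>). (\<sigma>, \<tau>, y, z)) ` (SIGMA (y, z):X \<times> X. A y z)"
    by (auto simp: A_def image_iff)
  also have "card \<dots> = card (SIGMA (y, z):X \<times> X. A y z)"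
    by (intro card_image) (auto simp: inj_on_def)
  also have "\<dots> = (\<Sum>(y, z)\<in>X \<times> X. card (A y z))"
    using assms fin by (subst card_SigmaI) (auto simp: case_prod_beta)
  also have "\<dots> = (\<Sum>y\<in>X. \<Sum>z\<in>X. card (A y z))"
    by (rule sum.cartesian_product[symmetric])
  finally show ?thesis
    unfolding A_def .
qed

lemma card_multiples_less_le:
  fixes m p :: nat
  assumes "0 < m" "m \<le> p"
  shows "real (card {\<tau>. \<tau> < p \<and> m dvd \<tau>}) \<le> 2 * real p / real m"
proof -
  have "inj_on (\<lambda>\<tau>. \<tau> div m) {\<tau>. \<tau> < p \<and> m dvd \<tau>}"
    by (auto simp: inj_on_def elim!: dvdE)
  moreover have "(\<lambda>\<tau>. \<tau> div m) ` {\<tau>. \<tau> < p \<and> m dvd \<tau>} \<subseteq> {..p div m}"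
    by (auto intro: div_le_mono)
  ultimately have "card {\<tau>. \<tau> < p \<and> m dvd \<tau>} \<le> p div m + 1"
    using card_inj_on_le[of _ _ "{..p div m}"] by fastforce
  then have "real (card {\<tau>. \<tau> < p \<and> m dvd \<tau>}) \<le> real (p div m + 1)"
    by (simp only: of_nat_le_iff)
  then have "real (card {\<tau>. \<tau> < p \<and> m dvd \<tau>}) \<le> real p / real m + 1"
    using of_nat_div_le_of_nat[of p m, where 'a=real] by simp
  moreover have "1 \<le> real p / real m"
    using assms by simp
  ultimately show ?thesis
    by simp
qed

lemma card_hash_0_at_0:
  fixes p m :: nat and X :: "nat set"
  assumes "finite X"
  shows "card {(\<sigma>, \<tau>, y, z). \<sigma> < p \<and> \<tau> < p \<and> y \<in> X \<and> z \<in> X \<and> hash p m \<sigma> \<tau> 0 = 0}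
    = card X ^ 2 * (p * card {\<tau>. \<tau> < p \<and> m dvd \<tau>})"
proof -
  have "{(\<sigma>, \<tau>). \<sigma> < p \<and> \<tau> < p \<and> hash p m \<sigma> \<tau> 0 = 0} = {..<p} \<times> {\<tau>. \<tau> < p \<and> m dvd \<tau>}"
    by (auto simp: hash_def)
  then show ?thesis
    using card_quadruples_eq_sum[OF assms, of p "\<lambda>\<sigma> \<tau> y z. hash p m \<sigma> \<tau> 0 = 0"]
    by (simp add: card_cartesian_product power2_eq_square)
qed

lemma cond_prob_ge_sum_gcd_max_ratio:
  fixes p m :: nat and X :: "nat set"
  assumes p: "prime p" and m: "0 < m" "m \<le> p" and X: "finite X" "X \<subseteq> {1..<p}" "X \<noteq> {}"
  shows "(\<Sum>y\<in>X. \<Sum>z\<in>X. gcd_max_ratio y z) / (8 * real m * real (card X) ^ 2)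
    \<le> cond_prob p m X 0 0 0"
proof -
  define k where "k = card X"
  define N where "N y z = card {(\<sigma>, \<tau>). \<sigma> < p \<and> \<tau> < p \<and>
    hash p m \<sigma> \<tau> 0 = 0 \<and> hash p m \<sigma> \<tau> y = 0 \<and> hash p m \<sigma> \<tau> z = 0}" for y z
  define A where "A = card {\<tau>. \<tau> < p \<and> m dvd \<tau>}"
  have "0 < p"
    using p prime_gt_0_nat by blast
  have num: "real p ^ 2 / (4 * real m ^ 2) * (\<Sum>y\<in>X. \<Sum>z\<in>X. gcd_max_ratio y z)
      \<le> (\<Sum>y\<in>X. \<Sum>z\<in>X. real (N y z))"
    unfolding sum_distrib_left N_def
    using X(2) by (intro sum_mono card_common_zero_hash_ge[OF p m(1)]) auto
  have den: "card {(\<sigma>, \<tau>, y, z). \<sigma> < p \<and> \<tau> < p \<and> y \<in> X \<and> z \<in> X \<and> hash p m \<sigma> \<tau> 0 = 0}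
      = k ^ 2 * (p * A)"
    unfolding k_def A_def using X(1) by (rule card_hash_0_at_0)
  have "0 < A"
    using \<open>0 < p\<close> unfolding A_def by (subst card_gt_0_iff) (auto intro!: exI[of _ 0])
  have "real A \<le> 2 * real p / real m"
    unfolding A_def using m by (rule card_multiples_less_le)
  have "cond_prob p m X 0 0 0 = (\<Sum>y\<in>X. \<Sum>z\<in>X. real (N y z)) / (real k ^ 2 * (real p * real A))"
    unfolding cond_prob_def den N_def
    using card_quadruples_eq_sum[OF X(1), of p
        "\<lambda>\<sigma> \<tau> y z. hash p m \<sigma> \<tau> 0 = 0 \<and> hash p m \<sigma> \<tau> y = 0 \<and> hash p m \<sigma> \<tau> z = 0"]
    by simp
  also have "\<dots> \<ge> real p ^ 2 / (4 * real m ^ 2) * (\<Sum>y\<in>X. \<Sum>z\<in>X. gcd_max_ratio y z)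
      / (real k ^ 2 * (real p * (2 * real p / real m)))"
  proof (rule frac_le)
    show "0 < real k ^ 2 * (real p * real A)"
      using X \<open>0 < p\<close> \<open>0 < A\<close> unfolding k_def by (simp add: card_gt_0_iff)
    show "real k ^ 2 * (real p * real A) \<le> real k ^ 2 * (real p * (2 * real p / real m))"
      using \<open>real A \<le> 2 * real p / real m\<close> by (intro mult_left_mono) auto
    show "0 \<le> (\<Sum>y\<in>X. \<Sum>z\<in>X. real (N y z))"
      by (intro sum_nonneg) simp
  qed (rule num)
  finally show ?thesis
    unfolding k_def[symmetric] using m \<open>0 < p\<close> by (simp add: field_simps power2_eq_square)
qed

section \<open>Products of primes as keys\<close>

lemma prime_factors_prod_primes:
  fixes S :: "nat set"
  assumes "finite S" "\<forall>q\<in>S. prime q"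
  shows "prime_factors (\<Prod>S) = S"
proof -
  have "0 \<notin> S"
    using assms(2) by auto
  then show ?thesis
    using assms by (simp add: prime_factors_prod prime_prime_factors)
qed

lemma inj_on_prod_primes:
  fixes P :: "nat set"
  assumes "finite P" "\<forall>q\<in>P. prime q"
  shows "inj_on Prod (Pow P)"
  by (rule inj_on_inverseI[of _ prime_factors])
    (use assms in \<open>auto intro!: prime_factors_prod_primes intro: finite_subset\<close>)

lemma prod_le_pow_card:
  fixes S :: "nat set"
  assumes "\<forall>q\<in>S. q \<le> T"
  shows "\<Prod>S \<le> T ^ card S"
proof (cases "finite S")
  case True
  then show ?thesis
    using prod_mono[of S "\<lambda>q. q" "\<lambda>_. T"] assms by simp
qed simp

text \<open>Both products share the factor \<open>\<Prod>(S \<inter> S')\<close>, and each has at most \<open>card (S - S')\<close>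
  further factors, all at most \<open>T\<close>.\<close>
lemma gcd_max_ratio_prod_primes_ge:
  fixes S S' :: "nat set" and T :: nat
  assumes fin: "finite S" "finite S'" and primes: "\<forall>q\<in>S \<union> S'. prime q \<and> q \<le> T"
    and card: "card S = card S'"
  shows "1 / real T ^ card (S - S') \<le> gcd_max_ratio (\<Prod>S) (\<Prod>S')"
proof (cases "T ^ card (S - S') = 0")
  case False
  define j where "j = card (S - S')"
  define C where "C = S \<inter> S'"
  have "card (S' - S) = j"
    using fin card unfolding j_def by (metis card_Diff_subset_Int Int_commute finite_Int)
  have prods: "\<Prod>S = \<Prod>C * \<Prod>(S - S')" "\<Prod>S' = \<Prod>C * \<Prod>(S' - S)"
    unfolding C_def using prod.Int_Diff fin by (metis Int_commute)+
  have "\<Prod>(S - S') \<le> T ^ j" "\<Prod>(S' - S) \<le> T ^ j"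
    using prod_le_pow_card[of "S - S'" T] prod_le_pow_card[of "S' - S" T] primes
      \<open>card (S' - S) = j\<close> unfolding j_def by auto
  then have "max (\<Prod>S) (\<Prod>S') \<le> \<Prod>C * T ^ j"
    unfolding prods by simp
  then have max_le: "real (max (\<Prod>S) (\<Prod>S')) \<le> real (\<Prod>C) * real T ^ j"
    by (metis of_nat_le_iff of_nat_mult of_nat_power)
  have pos: "0 < \<Prod>S" "0 < \<Prod>S'" "0 < \<Prod>C"
    using primes prime_gt_0_nat unfolding C_def by (auto intro!: prod_pos)
  have "\<Prod>C dvd gcd (\<Prod>S) (\<Prod>S')"
    unfolding prods by simp
  then have gcd_ge: "\<Prod>C \<le> gcd (\<Prod>S) (\<Prod>S')"
    using pos by (intro dvd_imp_le) auto
  have "1 / real T ^ j = real (\<Prod>C) / (real (\<Prod>C) * real T ^ j)"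
    using pos False unfolding j_def by (simp del: of_nat_prod)
  also have "\<dots> \<le> real (gcd (\<Prod>S) (\<Prod>S')) / real (max (\<Prod>S) (\<Prod>S'))"
    using max_le gcd_ge pos by (intro frac_le) (auto simp del: of_nat_prod)
  finally show ?thesis
    unfolding gcd_max_ratio_def j_def .
qed (simp add: gcd_max_ratio_def zero_power)

lemma card_exchange:
  assumes "finite S" "A \<subseteq> S" "finite B" "B \<inter> S = {}" "card B = card A"
  shows "card ((S - A) \<union> B) = card S"
proof -
  have "card ((S - A) \<union> B) = card (S - A) + card B"
    using assms by (intro card_Un_disjoint) auto
  then show ?thesis
    using assms card_mono[of S A] finite_subset[of A S] by (simp add: card_Diff_subset)
qed

text \<open>Replace a \<open>j\<close>-subset \<open>A\<close> of \<open>S\<close> by a \<open>j\<close>-subset \<open>B\<close> of \<open>P - S\<close>; distinct pairs \<open>(A, B)\<close>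
  give distinct sets \<open>(S - A) \<union> B\<close>.\<close>
lemma card_exchanged_subsets_ge:
  fixes P S :: "'a set"
  assumes P: "finite P" "card P = n" and S: "S \<subseteq> P" "card S = r"
  shows "(r choose j) * ((n - r) choose j) \<le> card {S'. S' \<subseteq> P \<and> card S' = r \<and> card (S - S') = j}"
proof -
  define I where "I = {A. A \<subseteq> S \<and> card A = j} \<times> {B. B \<subseteq> P - S \<and> card B = j}"
  define g where "g = (\<lambda>(A, B). (S - A) \<union> B)"
  define G where "G = {S'. S' \<subseteq> P \<and> card S' = r \<and> card (S - S') = j}"
  have "finite S"
    using P S finite_subset by blast
  have "card (P - S) = n - r"
    using P S \<open>finite S\<close> by (simp add: card_Diff_subset)
  then have card_I: "card I = (r choose j) * ((n - r) choose j)"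
    unfolding I_def using P S \<open>finite S\<close> by (simp add: card_cartesian_product n_subsets)
  have g_mem: "g x \<in> G" and g_inv: "(S - g x, g x - S) = x" if "x \<in> I" for x
  proof -
    obtain A B where x: "x = (A, B)" and A: "A \<subseteq> S" "card A = j" and B: "B \<subseteq> P - S" "card B = j"
      using \<open>x \<in> I\<close> unfolding I_def by auto
    have g: "g x = (S - A) \<union> B"
      unfolding x g_def by simp
    show "(S - g x, g x - S) = x"
      unfolding g using A B x by auto
    have "card (g x) = r"
      unfolding g using A B S \<open>finite S\<close> P(1) finite_subset[of B P]
      by (subst card_exchange) auto
    moreover have "S - g x = A"
      unfolding g using A B by auto
    ultimately show "g x \<in> G"
      unfolding G_def using A B S unfolding g by auto
  qed
  have "inj_on g I"
    using g_inv by (rule inj_on_inverseI)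
  then have "card I = card (g ` I)"
    by (simp add: card_image)
  also have "\<dots> \<le> card G"
  proof (rule card_mono)
    show "finite G"
      unfolding G_def using P(1) by simp
    show "g ` I \<subseteq> G"
      using g_mem by blast
  qed
  finally show ?thesis
    unfolding card_I G_def .
qed

lemma card_prod_subsets:
  fixes P :: "nat set"
  assumes "finite P" "\<forall>q\<in>P. prime q" "card P = n"
  shows "card (Prod ` {S. S \<subseteq> P \<and> card S = r}) = n choose r"
proof -
  have "inj_on Prod {S. S \<subseteq> P \<and> card S = r}"
    using inj_on_prod_primes[OF assms(1,2)] by (rule inj_on_subset) auto
  then show ?thesis
    using assms by (simp add: card_image n_subsets)
qed

lemma sum_gcd_max_ratio_prod_subsets_row_ge:
  fixes P S :: "nat set" and T n r j :: nat
  assumes P: "finite P" "\<forall>q\<in>P. prime q \<and> q \<le> T" "card P = n" and S: "S \<subseteq> P" "card S = r"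
  shows "real (r choose j) * real ((n - r) choose j) / real T ^ j
    \<le> (\<Sum>S'\<in>{S'. S' \<subseteq> P \<and> card S' = r}. gcd_max_ratio (\<Prod>S) (\<Prod>S'))"
proof -
  define G where "G = {S'. S' \<subseteq> P \<and> card S' = r \<and> card (S - S') = j}"
  have "(r choose j) * ((n - r) choose j) \<le> card G"
    unfolding G_def using P(1,3) S by (rule card_exchanged_subsets_ge)
  then have "real (r choose j) * real ((n - r) choose j) \<le> real (card G)"
    by (simp only: of_nat_mult[symmetric] of_nat_le_iff)
  then have "real (r choose j) * real ((n - r) choose j) / real T ^ j \<le> real (card G) / real T ^ j"
    by (rule divide_right_mono) simp
  also have "\<dots> = (\<Sum>S'\<in>G. 1 / real T ^ card (S - S'))"
    unfolding G_def by simp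
  also have "\<dots> \<le> (\<Sum>S'\<in>G. gcd_max_ratio (\<Prod>S) (\<Prod>S'))"
  proof (rule sum_mono)
    fix S' assume "S' \<in> G"
    then show "1 / real T ^ card (S - S') \<le> gcd_max_ratio (\<Prod>S) (\<Prod>S')"
      using P S unfolding G_def by (intro gcd_max_ratio_prod_primes_ge) (auto intro: finite_subset)
  qed
  also have "\<dots> \<le> (\<Sum>S'\<in>{S'. S' \<subseteq> P \<and> card S' = r}. gcd_max_ratio (\<Prod>S) (\<Prod>S'))"
    using P unfolding G_def by (intro sum_mono2) auto
  finally show ?thesis .
qed

lemma sum_gcd_max_ratio_prod_subsets_ge:
  fixes P :: "nat set" and T n r j :: nat
  assumes P: "finite P" "\<forall>q\<in>P. prime q \<and> q \<le> T" "card P = n"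
  defines "D \<equiv> Prod ` {S. S \<subseteq> P \<and> card S = r}"
  shows "real (card D) * (real (r choose j) * real ((n - r) choose j) / real T ^ j)
    \<le> (\<Sum>y\<in>D. \<Sum>z\<in>D. gcd_max_ratio y z)"
proof -
  define F where "F = {S. S \<subseteq> P \<and> card S = r}"
  have inj: "inj_on Prod F"
    unfolding F_def using inj_on_prod_primes[of P] P by (rule_tac inj_on_subset) auto
  have "real (card D) * (real (r choose j) * real ((n - r) choose j) / real T ^ j)
      = (\<Sum>S\<in>F. real (r choose j) * real ((n - r) choose j) / real T ^ j)"
    unfolding D_def F_def[symmetric] using inj by (simp add: card_image)
  also have "\<dots> \<le> (\<Sum>S\<in>F. \<Sum>S'\<in>F. gcd_max_ratio (\<Prod>S) (\<Prod>S'))"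
    unfolding F_def using P by (intro sum_mono sum_gcd_max_ratio_prod_subsets_row_ge) auto
  also have "\<dots> = (\<Sum>y\<in>D. \<Sum>z\<in>D. gcd_max_ratio y z)"
    unfolding D_def F_def[symmetric] using inj by (simp add: sum.reindex)
  finally show ?thesis .
qed

lemma pow_le_choose_mult_choose:
  fixes r s j T :: nat
  assumes "j \<le> r" "j \<le> s" "2 * j ^ 2 * T \<le> r * s"
  shows "(2 * real T) ^ j \<le> real (r choose j) * real (s choose j)"
proof (cases "j = 0")
  case False
  have "real (2 * j ^ 2 * T) \<le> real (r * s)"
    using assms(3) by (simp only: of_nat_le_iff)
  then have "2 * real T * (real j * real j) \<le> real r * real s"
    by (simp add: power2_eq_square mult_ac)
  then have "2 * real T \<le> real r / real j * (real s / real j)"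
    using False by (simp add: field_simps)
  then have "(2 * real T) ^ j \<le> (real r / real j * (real s / real j)) ^ j"
    by (intro power_mono) auto
  also have "\<dots> = (real r / real j) ^ j * (real s / real j) ^ j"
    by (rule power_mult_distrib)
  also have "\<dots> \<le> real (r choose j) * real (s choose j)"
    using assms by (intro mult_mono binomial_ge_n_over_k_pow_k) auto
  finally show ?thesis .
qed simp

lemma exists_prime_product_keys:
  fixes U r n T j :: nat
  assumes primes: "n \<le> card {q. prime q \<and> q \<le> T}" and "T ^ r < U"
  shows "\<exists>D. D \<subseteq> {1..<U} \<and> card D = n choose r \<and>
    real (card D) * (real (r choose j) * real ((n - r) choose j) / real T ^ j)
      \<le> (\<Sum>y\<in>D. \<Sum>z\<in>D. gcd_max_ratio y z)"
proof -
  obtain P where P: "P \<subseteq> {q. prime q \<and> q \<le> T}" "card P = n" "finite P"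
    using obtain_subset_with_card_n[OF primes] by metis
  then have P_primes: "\<forall>q\<in>P. prime q \<and> q \<le> T"
    by auto
  define D where "D = Prod ` {S. S \<subseteq> P \<and> card S = r}"
  have "D \<subseteq> {1..<U}"
  proof
    fix y assume "y \<in> D"
    then obtain S where S: "S \<subseteq> P" "card S = r" "y = \<Prod>S"
      unfolding D_def by auto
    have "0 < y"
      using S P_primes prime_gt_0_nat by (auto intro!: prod_pos)
    moreover have "y \<le> T ^ r"
      using S P_primes prod_le_pow_card[of S T] by auto
    ultimately show "y \<in> {1..<U}"
      using \<open>T ^ r < U\<close> by auto
  qed
  moreover have "card D = n choose r"
    unfolding D_def using P P_primes by (intro card_prod_subsets) auto
  moreover have "real (card D) * (real (r choose j) * real ((n - r) choose j) / real T ^ j)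
      \<le> (\<Sum>y\<in>D. \<Sum>z\<in>D. gcd_max_ratio y z)"
    unfolding D_def using P P_primes by (intro sum_gcd_max_ratio_prod_subsets_ge) auto
  ultimately show ?thesis
    by blast
qed

lemma sum_gcd_max_ratio_mono:
  assumes "D \<subseteq> X" "finite X"
  shows "(\<Sum>y\<in>D. \<Sum>z\<in>D. gcd_max_ratio y z) \<le> (\<Sum>y\<in>X. \<Sum>z\<in>X. gcd_max_ratio y z)"
proof -
  have "(\<Sum>y\<in>D. \<Sum>z\<in>D. gcd_max_ratio y z) \<le> (\<Sum>y\<in>D. \<Sum>z\<in>X. gcd_max_ratio y z)"
    using assms by (intro sum_mono sum_mono2) auto
  also have "\<dots> \<le> (\<Sum>y\<in>X. \<Sum>z\<in>X. gcd_max_ratio y z)"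
    using assms by (intro sum_mono2 sum_nonneg) auto
  finally show ?thesis .
qed

text \<open>Keys are products of \<open>r\<close> out of \<open>n\<close> primes up to \<open>T\<close>; pairs of keys that differ in \<open>j\<close>
  primes are the ones counted.\<close>
definition key_parameters :: "nat \<Rightarrow> nat \<Rightarrow> nat \<Rightarrow> nat \<Rightarrow> nat \<Rightarrow> nat \<Rightarrow> bool" where
  "key_parameters k U r n T j \<longleftrightarrow>
     n \<le> card {q. prime q \<and> q \<le> T} \<and> T ^ r < U \<and>
     2 * r \<le> n \<and> n choose r \<le> k \<and> k \<le> 2 * (n choose r) \<and>
     j \<le> r \<and> 2 * j\<^sup>2 * T \<le> r * (n - r)"

lemma two_pow_le_choose_mult_choose_div:
  assumes "key_parameters k U r n T j"
  shows "2 ^ j \<le> real (r choose j) * real ((n - r) choose j) / real T ^ j"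
proof (cases "j = 0")
  case False
  have j: "j \<le> r" "2 * r \<le> n" "2 * j\<^sup>2 * T \<le> r * (n - r)" "n \<le> card {q. prime q \<and> q \<le> T}"
    using assms unfolding key_parameters_def by auto
  have "0 < T"
  proof (rule ccontr)
    assume "\<not> 0 < T"
    then have none: "{q. prime q \<and> q \<le> T} = {}"
      by auto
    have "n \<le> 0"
      using j(4) by (simp only: none card.empty)
    then show False
      using j(1,2) False by linarith
  qed
  moreover have "(2 * real T) ^ j \<le> real (r choose j) * real ((n - r) choose j)"
    using j by (intro pow_le_choose_mult_choose) auto
  ultimately show ?thesis
    by (simp add: field_simps power_mult_distrib)
qed simp

lemma cond_prob_ge_prime_product_keys:
  fixes p m U k r n T j :: nat
  assumes p: "prime p" "U < p" and m: "0 < m" "m \<le> U" and k: "1 \<le> k" "k < U"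
    and params: "key_parameters k U r n T j"
  shows "\<exists>X. X \<subseteq> {1..<U} \<and> card X = k \<and> 2 ^ j / (16 * real m * real k) \<le> cond_prob p m X 0 0 0"
proof -
  have kp: "n \<le> card {q. prime q \<and> q \<le> T}" "T ^ r < U" "n choose r \<le> k" "k \<le> 2 * (n choose r)"
    using params unfolding key_parameters_def by auto
  obtain D where D: "D \<subseteq> {1..<U}" "card D = n choose r"
    and sum_D: "real (card D) * (real (r choose j) * real ((n - r) choose j) / real T ^ j)
      \<le> (\<Sum>y\<in>D. \<Sum>z\<in>D. gcd_max_ratio y z)"
    using exists_prime_product_keys[OF kp(1,2), of j] by blast
  have "\<exists>X. D \<subseteq> X \<and> X \<subseteq> {1..<U} \<and> card X = k"
    using D kp(3) k by (intro exists_subset_between) auto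
  then obtain X where X: "D \<subseteq> X" "X \<subseteq> {1..<U}" "card X = k"
    by blast
  then have "finite X" "X \<noteq> {}"
    using k finite_subset by auto
  have "real k / 2 * 2 ^ j \<le> real (card D) * (real (r choose j) * real ((n - r) choose j) / real T ^ j)"
    using D(2) kp(4) two_pow_le_choose_mult_choose_div[OF params] by (intro mult_mono) auto
  also have "\<dots> \<le> (\<Sum>y\<in>X. \<Sum>z\<in>X. gcd_max_ratio y z)"
    using sum_D sum_gcd_max_ratio_mono[OF X(1) \<open>finite X\<close>] by linarith
  finally have "2 ^ j / (16 * real m * real k)
      \<le> (\<Sum>y\<in>X. \<Sum>z\<in>X. gcd_max_ratio y z) / (8 * real m * real (card X) ^ 2)"
    using X(3) k m by (simp add: field_simps power2_eq_square)
  also have "\<dots> \<le> cond_prob p m X 0 0 0"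
    using X p m \<open>finite X\<close> \<open>X \<noteq> {}\<close> by (intro cond_prob_ge_sum_gcd_max_ratio) auto
  finally show ?thesis
    using X by blast
qed

section \<open>Choice of the parameters\<close>

lemma ln_le_two_sqrt:
  fixes x :: real
  assumes "0 < x"
  shows "ln x \<le> 2 * sqrt x"
proof -
  have "ln x = 2 * ln (sqrt x)"
    using assms by (simp add: ln_sqrt)
  also have "\<dots> \<le> 2 * (sqrt x - 1)"
    using assms by (intro mult_left_mono ln_le_minus_one) auto
  finally show ?thesis
    by simp
qed

lemma ln_squared_le:
  fixes x :: real
  assumes "1 \<le> x"
  shows "(ln x)\<^sup>2 \<le> 16 * sqrt x"
proof -
  have "ln x = 2 * ln (sqrt x)"
    using assms by (simp add: ln_sqrt)
  also have "\<dots> \<le> 4 * sqrt (sqrt x)"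
    using ln_le_two_sqrt[of "sqrt x"] assms by simp
  finally have "(ln x)\<^sup>2 \<le> (4 * sqrt (sqrt x))\<^sup>2"
    using assms by (intro power_mono) auto
  then show ?thesis
    using assms by (simp add: power_mult_distrib)
qed

lemma exists_crossing:
  fixes P :: "nat \<Rightarrow> bool"
  assumes "P a" "\<not> P b" "a \<le> b"
  shows "\<exists>n. a \<le> n \<and> P n \<and> \<not> P (Suc n)"
  using assms(2,3)
proof (induction b)
  case 0
  then show ?case using assms(1) by simp
next
  case (Suc b)
  then show ?case
    using assms(1) by (cases "P b"; cases "a \<le> b") (auto simp: le_Suc_eq)
qed

lemma exists_choose_between:
  fixes r k :: nat
  assumes r: "1 \<le> r" and k: "(2 * r choose r) \<le> k"
  shows "\<exists>n. 2 * r \<le> n \<and> n choose r \<le> k \<and> k \<le> 2 * (n choose r)"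
proof -
  have "0 < 2 * r choose r"
    by simp
  then have "1 \<le> k"
    using k by linarith
  have "real (k + 1) \<le> real (k + 1) ^ r"
    using r by (intro self_le_power) auto
  also have "\<dots> = (real ((k + 1) * r) / real r) ^ r"
    using r by (simp only: of_nat_mult) simp
  also have "\<dots> \<le> real ((k + 1) * r choose r)"
    by (rule binomial_ge_n_over_k_pow_k) simp
  finally have "\<not> ((k + 1) * r choose r) \<le> k"
    by linarith
  moreover have "2 * r \<le> (k + 1) * r"
    using \<open>1 \<le> k\<close> by simp
  ultimately obtain n where n: "2 * r \<le> n" "n choose r \<le> k" "\<not> Suc n choose r \<le> k"
    using exists_crossing[of "\<lambda>n. n choose r \<le> k" "2 * r" "(k + 1) * r"] k by auto
  have "(Suc n - r) * (Suc n choose r) = Suc n * (n choose r)"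
    using binomial_absorb_comp[of "Suc n" r] by simp
  also have "\<dots> \<le> 2 * (Suc n - r) * (n choose r)"
    using n(1) by (intro mult_le_mono1) simp
  also have "\<dots> = (Suc n - r) * (2 * (n choose r))"
    by simp
  finally have "(Suc n - r) * (Suc n choose r) \<le> (Suc n - r) * (2 * (n choose r))" .
  then have "Suc n choose r \<le> 2 * (n choose r)"
    using n(1) by simp
  then show ?thesis
    using n by auto
qed

lemma central_binomial_le_exp: "real (2 * r choose r) \<le> exp (real (2 * r))"
proof -
  have "real (2 * r choose r) \<le> 2 ^ (2 * r)"
    using binomial_le_pow2[of "2 * r" r] by (metis of_nat_le_iff of_nat_numeral of_nat_power)
  also have "\<dots> \<le> exp 1 ^ (2 * r)"
    using exp_ge_add_one_self[of 1] by (intro power_mono) auto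
  also have "\<dots> = exp (real (2 * r))"
    by (simp add: exp_of_nat_mult[symmetric])
  finally show ?thesis .
qed

lemma ln_le_if_choose_le:
  fixes r n k :: nat
  assumes "0 < r" "r \<le> n" "n choose r \<le> k"
  shows "ln (real n) \<le> ln (real r) + ln (real k) / real r"
proof -
  have "(real n / real r) ^ r \<le> real (n choose r)"
    using assms by (intro binomial_ge_n_over_k_pow_k) simp
  also have "\<dots> \<le> real k"
    using assms by simp
  finally have "(real n / real r) ^ r \<le> real k" .
  moreover have "0 < n choose r"
    using assms by simp
  then have "0 < k"
    using assms by linarith
  ultimately have "real r * ln (real n / real r) \<le> ln (real k)"
    using assms by (subst ln_realpow[symmetric], subst ln_le_cancel_iff) auto
  then show ?thesis
    using assms by (simp add: ln_div field_simps)
qed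

lemma floor_sqrt_bounds:
  fixes x :: real
  assumes "0 \<le> x"
  shows "(real (nat \<lfloor>sqrt x\<rfloor>))\<^sup>2 \<le> x" "sqrt x - 1 < real (nat \<lfloor>sqrt x\<rfloor>)"
proof -
  have "0 \<le> sqrt x"
    using assms by simp
  then have "real (nat \<lfloor>sqrt x\<rfloor>) \<le> sqrt x" "sqrt x - 1 < real (nat \<lfloor>sqrt x\<rfloor>)"
    by linarith+
  then show "(real (nat \<lfloor>sqrt x\<rfloor>))\<^sup>2 \<le> x" "sqrt x - 1 < real (nat \<lfloor>sqrt x\<rfloor>)"
    using assms by (metis of_nat_0_le_iff power_mono real_sqrt_pow2)+
qed

lemma exchange_condition_if_sq_le:
  fixes r n T j :: nat
  assumes n: "2 * r \<le> n" "2 \<le> ln (real n)" and T: "real T \<le> 32 * real n * ln (real n)"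
    and j: "(real j)\<^sup>2 \<le> real r / (128 * ln (real n))"
  shows "2 * j\<^sup>2 * T \<le> r * (n - r)"
proof -
  have "real (2 * j\<^sup>2 * T) = 2 * ((real j)\<^sup>2 * real T)"
    by simp
  also have "\<dots> \<le> 2 * (real r / (128 * ln (real n)) * (32 * real n * ln (real n)))"
    using j T n(2) by (intro mult_left_mono mult_mono) auto
  also have "\<dots> = real r * (real n / 2)"
    using n by (simp add: field_simps)
  also have "\<dots> \<le> real r * real (n - r)"
    using n by (intro mult_left_mono) (auto simp: of_nat_diff)
  finally show ?thesis
    by (simp only: of_nat_mult[symmetric] of_nat_le_iff)
qed

lemma exists_exchange_size:
  fixes r n T :: nat and \<eta> L :: real
  assumes n: "2 * r \<le> n" "16 \<le> n" and T: "real T \<le> 32 * real n * ln (real n)"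
    and ratio: "\<eta>\<^sup>2 * L / 32 \<le> real r / ln (real n)" and \<eta>: "0 < \<eta>" and L: "640 / \<eta> \<le> sqrt L"
  shows "\<exists>j \<le> r. 2 * j\<^sup>2 * T \<le> r * (n - r) \<and> 4 + \<eta> * sqrt L / 128 \<le> real j"
proof -
  define x where "x = real r / (128 * ln (real n))"
  define j where "j = nat \<lfloor>sqrt x\<rfloor>"
  have ln_n: "2 \<le> ln (real n)"
    using n(2) by (intro two_le_ln) simp
  then have "0 \<le> x"
    unfolding x_def by simp
  then have j: "(real j)\<^sup>2 \<le> x" "sqrt x - 1 < real j"
    unfolding j_def by (rule floor_sqrt_bounds)+
  have "x \<le> real r / 1"
    unfolding x_def using ln_n by (intro divide_left_mono) auto
  moreover have "real j \<le> (real j)\<^sup>2"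
    by (cases j) (auto simp: power2_eq_square)
  ultimately have "j \<le> r"
    using j(1) by linarith
  moreover have "2 * j\<^sup>2 * T \<le> r * (n - r)"
    using n(1) ln_n T j(1) unfolding x_def by (rule exchange_condition_if_sq_le)
  moreover have "4 + \<eta> * sqrt L / 128 \<le> real j"
  proof -
    have "\<eta>\<^sup>2 * L / 4096 \<le> x"
      unfolding x_def using ratio ln_n by (simp add: field_simps)
    then have "\<eta> * sqrt L / 64 \<le> sqrt x"
      using \<eta> real_sqrt_le_mono by (fastforce simp: real_sqrt_mult real_sqrt_divide)
    moreover have "5 \<le> \<eta> * sqrt L / 128"
      using L \<eta> by (simp add: field_simps)
    ultimately show ?thesis
      using j(2) by linarith
  qed
  ultimately show ?thesis
    by blast
qed

lemma less_and_ln_le_if_powr_le: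
  fixes \<epsilon> :: real and k U :: nat
  assumes "0 < \<epsilon>" "1 < real k" "real k powr (1 + \<epsilon>) \<le> real U"
  shows "k < U" "(1 + \<epsilon>) * ln (real k) \<le> ln (real U)"
proof -
  have "real k powr (1 + \<epsilon>) = real k * real k powr \<epsilon>"
    using assms by (simp add: powr_add)
  moreover have "1 < real k powr \<epsilon>"
    using assms by simp
  ultimately have "real k < real k powr (1 + \<epsilon>)"
    using assms by simp
  then show "k < U"
    using assms by linarith
  have "(1 + \<epsilon>) * ln (real k) = ln (real k powr (1 + \<epsilon>))"
    using assms by (simp add: ln_powr)
  also have "\<dots> \<le> ln (real U)"
    using assms \<open>k < U\<close> by (subst ln_le_cancel_iff) auto
  finally show "(1 + \<epsilon>) * ln (real k) \<le> ln (real U)" .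
qed

lemma sixteen_exp_le_two_pow:
  fixes x :: real
  assumes "4 + x \<le> real j"
  shows "16 * exp (x * ln 2) \<le> 2 ^ j"
proof -
  have "16 * exp (x * ln 2) = exp ((4 + x) * ln 2)"
    by (simp add: exp_add distrib_right exp_of_nat_mult[of 4, simplified])
  also have "\<dots> \<le> exp (real j * ln 2)"
    using assms by simp
  also have "\<dots> = 2 ^ j"
    by (simp add: exp_of_nat_mult)
  finally show ?thesis .
qed

text \<open>\<open>\<kappa>\<close> and \<open>\<mu>\<close> stand for \<open>ln k\<close> and \<open>ln U\<close>, and \<open>\<eta> = min \<epsilon> 1 / 8\<close>. \<open>\<rho>\<close> is the target number
  \<open>r\<close> of primes per key, and \<open>L\<close> is the quantity under the square root in the theorem. The bound
  on \<open>sqrt \<kappa>\<close> gives \<open>L \<ge> (640 / \<eta>)\<^sup>2\<close>, which absorbs the additive constants in the choice of \<open>j\<close>.\<close>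
locale log_regime =
  fixes \<eta> \<kappa> \<mu> :: real
  assumes \<eta>_pos: "0 < \<eta>" and \<eta>_le: "\<eta> \<le> 1 / 8"
    and \<kappa>_ge_exp: "exp 16 \<le> \<kappa>"
    and sqrt_\<kappa>_ge: "16 * (640 / \<eta>)\<^sup>2 \<le> sqrt \<kappa>"
    and \<mu>_ge: "(1 + 8 * \<eta>) * \<kappa> \<le> \<mu>"
begin

definition \<rho> :: real where "\<rho> = min (\<kappa> / 8) (\<eta> * \<mu> / ln \<mu>)"

definition L :: real where "L = min (\<kappa> / ln \<kappa>) (\<mu> / (ln \<mu>)\<^sup>2)"

lemma \<kappa>_pos: "0 < \<kappa>"
  using \<kappa>_ge_exp exp_gt_zero[of 16] by linarith

lemma \<kappa>_le_\<mu>: "\<kappa> \<le> \<mu>"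
proof -
  have "\<kappa> \<le> (1 + 8 * \<eta>) * \<kappa>"
    using \<eta>_pos \<kappa>_pos by simp
  then show ?thesis
    using \<mu>_ge by linarith
qed

lemma ln_\<kappa>_ge: "16 \<le> ln \<kappa>"
  using \<kappa>_ge_exp \<kappa>_pos by (subst ln_ge_iff) auto

lemma ln_\<mu>_ge: "16 \<le> ln \<mu>"
proof -
  have "ln \<kappa> \<le> ln \<mu>"
    using \<kappa>_le_\<mu> \<kappa>_pos by simp
  then show ?thesis
    using ln_\<kappa>_ge by linarith
qed

lemma one_less_\<kappa>: "1 < \<kappa>"
  using ln_\<kappa>_ge ln_gt_zero_iff[OF \<kappa>_pos] by linarith

lemma one_less_\<mu>: "1 < \<mu>"
  using one_less_\<kappa> \<kappa>_le_\<mu> by linarith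

lemma sqrt_\<kappa>_ge_inverse: "10240 / \<eta> \<le> sqrt \<kappa>"
proof -
  have "1 \<le> 640 / \<eta>"
    using \<eta>_pos \<eta>_le by (simp add: field_simps)
  then have "640 / \<eta> \<le> (640 / \<eta>)\<^sup>2"
    by (rule self_le_power) simp
  then show ?thesis
    using sqrt_\<kappa>_ge by simp
qed

lemma L_ge: "sqrt \<kappa> / 16 \<le> L"
proof -
  have "sqrt \<kappa> / 16 \<le> \<kappa> / (2 * sqrt \<kappa>)"
    using \<kappa>_pos by (simp add: field_simps real_sqrt_mult[symmetric])
  also have "\<dots> \<le> \<kappa> / ln \<kappa>"
    using ln_le_two_sqrt[OF \<kappa>_pos] ln_\<kappa>_ge one_less_\<kappa>
    by (intro divide_left_mono) (auto simp: zero_less_mult_iff)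
  finally have "sqrt \<kappa> / 16 \<le> \<kappa> / ln \<kappa>" .
  have "sqrt \<kappa> / 16 \<le> sqrt \<mu> / 16"
    using \<kappa>_le_\<mu> by simp
  also have "\<dots> = \<mu> / (16 * sqrt \<mu>)"
    using \<kappa>_pos \<kappa>_le_\<mu> by (simp add: field_simps real_sqrt_mult[symmetric])
  also have "\<dots> \<le> \<mu> / (ln \<mu>)\<^sup>2"
    using ln_squared_le[of \<mu>] ln_\<mu>_ge one_less_\<mu>
    by (intro divide_left_mono) (auto simp: zero_less_mult_iff)
  finally show ?thesis
    using \<open>sqrt \<kappa> / 16 \<le> \<kappa> / ln \<kappa>\<close> unfolding L_def by simp
qed

lemma \<rho>_ge: "9 \<le> \<rho>"
proof -
  have "10240 / \<eta> \<le> sqrt \<kappa>"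
    by (rule sqrt_\<kappa>_ge_inverse)
  moreover have "9 \<le> 10240 / \<eta>"
    using \<eta>_pos \<eta>_le by (simp add: field_simps)
  ultimately have "9 * 9 \<le> sqrt \<kappa> * sqrt \<kappa>"
    using \<kappa>_pos by (intro mult_mono) auto
  then have "9 \<le> \<kappa> / 8"
    using \<kappa>_pos by simp
  have "\<mu> / (2 * sqrt \<mu>) \<le> \<mu> / ln \<mu>"
    using ln_le_two_sqrt[of \<mu>] ln_\<mu>_ge one_less_\<mu>
    by (intro divide_left_mono) (auto simp: zero_less_mult_iff)
  moreover have "\<mu> / (2 * sqrt \<mu>) = sqrt \<mu> / 2"
    using \<kappa>_pos \<kappa>_le_\<mu> by (simp add: field_simps real_sqrt_mult[symmetric])
  moreover have "sqrt \<kappa> \<le> sqrt \<mu>"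
    using \<kappa>_le_\<mu> by simp
  ultimately have "sqrt \<kappa> / 2 \<le> \<mu> / ln \<mu>"
    by linarith
  then have "\<eta> * (sqrt \<kappa> / 2) \<le> \<eta> * (\<mu> / ln \<mu>)"
    using \<eta>_pos by (intro mult_left_mono) auto
  moreover have "\<eta> * (10240 / \<eta> / 2) \<le> \<eta> * (sqrt \<kappa> / 2)"
    using \<eta>_pos \<open>10240 / \<eta> \<le> sqrt \<kappa>\<close> by (intro mult_left_mono) auto
  moreover have "\<eta> * (10240 / \<eta> / 2) = 5120"
    using \<eta>_pos by simp
  ultimately have "9 \<le> \<eta> * (\<mu> / ln \<mu>)"
    by linarith
  then show ?thesis
    using \<open>9 \<le> \<kappa> / 8\<close> unfolding \<rho>_def by simp
qed

lemma L_nonneg: "0 \<le> L"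
proof -
  have "0 \<le> sqrt \<kappa> / 16"
    using \<kappa>_pos by simp
  then show ?thesis
    using L_ge by linarith
qed

lemma ratio_ge_if_\<rho>_eq_\<kappa>:
  fixes r n :: real
  assumes \<rho>: "\<rho> = \<kappa> / 8" and r: "\<rho> / 2 \<le> r" "r \<le> \<rho>" and n: "0 < ln n" "ln n \<le> ln r + \<kappa> / r"
  shows "\<eta>\<^sup>2 * L / 32 \<le> r / ln n"
proof -
  have "0 < r"
    using r \<rho>_ge by linarith
  then have "\<kappa> / r \<le> 16" "ln r \<le> ln \<kappa>"
    using \<rho> r \<kappa>_pos by (simp_all add: field_simps)
  then have "ln n \<le> 2 * ln \<kappa>"
    using n ln_\<kappa>_ge by linarith
  then have "(\<kappa> / 16) / (2 * ln \<kappa>) \<le> r / ln n"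
    using \<rho> r n \<kappa>_pos by (intro frac_le) auto
  moreover have "\<eta>\<^sup>2 \<le> 1"
    using \<eta>_pos \<eta>_le by (simp add: power_le_one)
  then have "\<eta>\<^sup>2 * L / 32 \<le> (\<kappa> / 16) / (2 * ln \<kappa>)"
    using mult_right_mono[of "\<eta>\<^sup>2" 1 L] L_nonneg unfolding L_def by simp
  ultimately show ?thesis
    by linarith
qed

lemma ratio_ge_if_\<rho>_eq_\<mu>:
  fixes r n :: real
  assumes \<rho>: "\<rho> = \<eta> * \<mu> / ln \<mu>" and r: "\<rho> / 2 \<le> r" "r \<le> \<rho>"
    and n: "0 < ln n" "ln n \<le> ln r + \<kappa> / r"
  shows "\<eta>\<^sup>2 * L / 32 \<le> r / ln n"
proof -
  have "0 < r"
    using r \<rho>_ge by linarith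
  have "\<eta> * \<mu> / ln \<mu> \<le> \<mu>"
    using \<eta>_le \<eta>_pos ln_\<mu>_ge one_less_\<mu> by (simp add: field_simps)
  then have "ln r \<le> ln \<mu>"
    using \<rho> r \<open>0 < r\<close> by simp
  have "\<kappa> / r \<le> \<mu> / (\<eta> * \<mu> / (2 * ln \<mu>))"
    using \<rho> r \<open>0 < r\<close> \<kappa>_le_\<mu> \<kappa>_pos \<eta>_pos ln_\<mu>_ge by (intro frac_le) auto
  also have "\<dots> = 2 * ln \<mu> / \<eta>"
    using \<eta>_pos one_less_\<mu> by (simp add: field_simps)
  finally have "\<kappa> / r \<le> 2 * ln \<mu> / \<eta>" .
  moreover have "ln \<mu> \<le> ln \<mu> / \<eta>"
    using \<eta>_pos \<eta>_le ln_\<mu>_ge by (simp add: le_divide_eq mult_left_le)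
  moreover have "3 * ln \<mu> / \<eta> = ln \<mu> / \<eta> + 2 * ln \<mu> / \<eta>"
    by (simp add: field_simps)
  ultimately have "ln n \<le> 3 * ln \<mu> / \<eta>"
    using n \<open>ln r \<le> ln \<mu>\<close> by linarith
  have le: "\<eta>\<^sup>2 * L \<le> \<eta>\<^sup>2 * (\<mu> / (ln \<mu>)\<^sup>2)"
    unfolding L_def by (intro mult_left_mono) auto
  have scale: "a / 32 \<le> b / 6" if "a \<le> b" "0 \<le> a" for a b :: real
    using that by linarith
  have "\<eta>\<^sup>2 * L / 32 \<le> \<eta>\<^sup>2 * (\<mu> / (ln \<mu>)\<^sup>2) / 6"
    by (rule scale[OF le]) (simp add: L_nonneg)
  also have "\<dots> = (\<eta> * \<mu> / (2 * ln \<mu>)) / (3 * ln \<mu> / \<eta>)"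
    using \<eta>_pos ln_\<mu>_ge by (simp add: field_simps power2_eq_square)
  also have "\<dots> \<le> r / ln n"
    using \<open>ln n \<le> 3 * ln \<mu> / \<eta>\<close> \<rho> r n \<eta>_pos one_less_\<mu> ln_\<mu>_ge by (intro frac_le) auto
  finally show ?thesis .
qed

text \<open>If \<open>\<rho> = \<kappa> / 8\<close> then \<open>ln n = O(ln \<kappa>)\<close> and \<open>r / ln n\<close> is of order \<open>\<kappa> / ln \<kappa>\<close>; otherwise
  \<open>\<rho> = \<eta> \<mu> / ln \<mu>\<close>, \<open>ln n = O(ln \<mu> / \<eta>)\<close> and \<open>r / ln n\<close> is of order \<open>\<eta>\<^sup>2 \<mu> / (ln \<mu>)\<^sup>2\<close>.\<close>
lemma ratio_ge:
  fixes r n :: real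
  assumes "\<rho> / 2 \<le> r" "r \<le> \<rho>" "0 < ln n" "ln n \<le> ln r + \<kappa> / r"
  shows "\<eta>\<^sup>2 * L / 32 \<le> r / ln n"
proof (cases "\<kappa> / 8 \<le> \<eta> * \<mu> / ln \<mu>")
  case True
  then have "\<rho> = \<kappa> / 8"
    unfolding \<rho>_def by simp
  then show ?thesis
    using assms by (rule ratio_ge_if_\<rho>_eq_\<kappa>)
next
  case False
  then have "\<rho> = \<eta> * \<mu> / ln \<mu>"
    unfolding \<rho>_def by simp
  then show ?thesis
    using assms by (rule ratio_ge_if_\<rho>_eq_\<mu>)
qed

lemma three_\<eta>_\<mu>_plus_\<kappa>_less: "3 * \<eta> * \<mu> + \<kappa> < \<mu>"
proof -
  have "\<mu> > 0"
    using one_less_\<mu> by simp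
  have "(3 * \<eta> * \<mu> + \<kappa>) * (1 + 8 * \<eta>) \<le> 3 * \<eta> * \<mu> * (1 + 8 * \<eta>) + \<mu>"
    using \<mu>_ge by (simp add: algebra_simps)
  also have "\<dots> < \<mu> * (1 + 8 * \<eta>)"
  proof -
    have "3 * \<eta> * (1 + 8 * \<eta>) < 8 * \<eta>"
      using \<eta>_pos \<eta>_le by (simp add: algebra_simps power2_eq_square[symmetric])
    then have "3 * \<eta> * (1 + 8 * \<eta>) * \<mu> < 8 * \<eta> * \<mu>"
      using \<open>\<mu> > 0\<close> by (rule mult_strict_right_mono)
    then show ?thesis
      by (simp add: algebra_simps)
  qed
  finally show ?thesis
    using \<eta>_pos by (simp add: mult_less_cancel_right_pos)
qed

lemma ln_le_if_le_n_ln_n: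
  fixes n T :: real
  assumes n: "16 \<le> n" "ln n \<le> 2 * \<kappa>" and T: "0 < T" "T \<le> 32 * n * ln n"
  shows "ln T \<le> 6 + ln n + ln \<mu>"
proof -
  have ln_n: "2 \<le> ln n"
    using n(1) by (rule two_le_ln)
  then have "ln (ln n) \<le> ln (2 * \<kappa>)"
    using n(2) by (subst ln_le_cancel_iff) auto
  also have "\<dots> = ln 2 + ln \<kappa>"
    using \<kappa>_pos by (simp add: ln_mult)
  also have "\<dots> \<le> 1 + ln \<mu>"
    using ln_2_less_1 ln_le_cancel_iff[of \<kappa> \<mu>] \<kappa>_le_\<mu> \<kappa>_pos by linarith
  finally have lnln: "ln (ln n) \<le> 1 + ln \<mu>" .
  have "ln T \<le> ln (32 * n * ln n)"
    using T by simp
  also have "\<dots> = ln 32 + ln n + ln (ln n)"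
    using n(1) ln_n by (simp add: ln_mult)
  also have "ln (32::real) = 5 * ln 2"
    using ln_realpow[of 2 5] by simp
  finally show ?thesis
    using lnln ln_2_less_1 by linarith
qed

text \<open>\<open>r ln T \<le> \<kappa> + 3 r ln \<mu> \<le> \<kappa> + 3 \<eta> \<mu>\<close>, and \<open>\<kappa> \<le> \<mu> / (1 + 8 \<eta>)\<close>.\<close>
lemma exponent_less:
  fixes r n T :: real
  assumes r: "1 \<le> r" "r \<le> \<rho>" and n: "16 \<le> n" "ln n \<le> ln r + \<kappa> / r"
    and T: "0 < T" "T \<le> 32 * n * ln n"
  shows "r * ln T < \<mu>"
proof -
  have r_le: "r \<le> \<kappa>" "r * ln \<mu> \<le> \<eta> * \<mu>"
    using r \<kappa>_pos ln_\<mu>_ge unfolding \<rho>_def by (auto simp: le_divide_eq)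
  have "ln r \<le> ln \<mu>"
    using r r_le \<kappa>_le_\<mu> by simp
  have "ln r \<le> r" "\<kappa> / r \<le> \<kappa>"
    using r \<kappa>_pos by (auto simp: ln_bound divide_le_eq)
  then have "ln n \<le> 2 * \<kappa>"
    using n(2) r_le by linarith
  then have "r * ln T \<le> r * (6 + ln n + ln \<mu>)"
    using r n T by (intro mult_left_mono ln_le_if_le_n_ln_n) auto
  also have "\<dots> \<le> r * (6 + ln r + \<kappa> / r + ln \<mu>)"
    using n r by (intro mult_left_mono) auto
  also have "\<dots> = r * (6 + ln r + ln \<mu>) + \<kappa>"
    using r by (simp add: algebra_simps)
  also have "\<dots> \<le> r * (3 * ln \<mu>) + \<kappa>"
    using r \<open>ln r \<le> ln \<mu>\<close> ln_\<mu>_ge by (intro add_right_mono mult_left_mono) auto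
  also have "\<dots> \<le> 3 * \<eta> * \<mu> + \<kappa>"
    using r_le by simp
  also have "\<dots> < \<mu>"
    by (rule three_\<eta>_\<mu>_plus_\<kappa>_less)
  finally show ?thesis .
qed

lemma exists_binomial_parameters:
  fixes k :: nat
  assumes \<kappa>_def: "\<kappa> = ln (real k)"
  shows "\<exists>r n. \<rho> / 2 \<le> real r \<and> real r \<le> \<rho> \<and> 2 * r \<le> n \<and> 16 \<le> n \<and>
    n choose r \<le> k \<and> k \<le> 2 * (n choose r) \<and> ln (real n) \<le> ln (real r) + \<kappa> / real r"
proof -
  have "0 < real k"
    using \<kappa>_pos \<kappa>_def by (cases "k = 0") auto
  define r where "r = nat \<lfloor>\<rho>\<rfloor>"
  have r: "\<rho> / 2 \<le> real r" "real r \<le> \<rho>" "8 \<le> r"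
    unfolding r_def using \<rho>_ge by linarith+
  have "real (2 * r choose r) \<le> exp (real (2 * r))"
    by (rule central_binomial_le_exp)
  also have "\<dots> \<le> exp \<kappa>"
    using r \<kappa>_pos unfolding \<rho>_def by simp
  also have "\<dots> = real k"
    using \<kappa>_def \<open>0 < real k\<close> by simp
  finally have "2 * r choose r \<le> k"
    by (simp only: of_nat_le_iff)
  then have "\<exists>n. 2 * r \<le> n \<and> n choose r \<le> k \<and> k \<le> 2 * (n choose r)"
    using r(3) by (intro exists_choose_between) auto
  then obtain n where n: "2 * r \<le> n" "n choose r \<le> k" "k \<le> 2 * (n choose r)"
    by blast
  then have "ln (real n) \<le> ln (real r) + \<kappa> / real r"
    unfolding \<kappa>_def using r(3) by (intro ln_le_if_choose_le) auto
  then show ?thesis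
    using r n by (intro exI[of _ r] exI[of _ n]) auto
qed

lemma exists_key_parameters:
  fixes k U :: nat
  assumes \<kappa>_def: "\<kappa> = ln (real k)" and \<mu>_def: "\<mu> = ln (real U)"
  shows "\<exists>r n T j. key_parameters k U r n T j \<and> 4 + \<eta> * sqrt L / 128 \<le> real j"
proof -
  obtain r n where r: "\<rho> / 2 \<le> real r" "real r \<le> \<rho>"
    and n: "2 * r \<le> n" "16 \<le> n" "n choose r \<le> k" "k \<le> 2 * (n choose r)"
      "ln (real n) \<le> ln (real r) + \<kappa> / real r"
    using exists_binomial_parameters[OF \<kappa>_def] by blast
  obtain T where T: "0 < T" "n \<le> card {q. prime q \<and> q \<le> T}" "real T \<le> 32 * real n * ln (real n)"
    using exists_prime_bound[OF n(2)] by blast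
  have "0 < real U"
    using one_less_\<mu> \<mu>_def by (cases "U = 0") auto
  have "1 \<le> real r"
    using r \<rho>_ge by linarith
  then have "real r * ln (real T) < \<mu>"
    using r n T by (intro exponent_less) auto
  then have "exp (real r * ln (real T)) < exp (ln (real U))"
    unfolding \<mu>_def by simp
  moreover have "real (T ^ r) = exp (real r * ln (real T))"
    using T(1) by (simp add: exp_of_nat_mult)
  ultimately have "real (T ^ r) < real U"
    using \<open>0 < real U\<close> by simp
  have "\<eta>\<^sup>2 * L / 32 \<le> real r / ln (real n)"
    using r n two_le_ln[of "real n"] by (intro ratio_ge) auto
  moreover have "640 / \<eta> \<le> sqrt L"
  proof -
    have "(640 / \<eta>)\<^sup>2 \<le> L"
      using sqrt_\<kappa>_ge L_ge by linarith
    then have "sqrt ((640 / \<eta>)\<^sup>2) \<le> sqrt L"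
      by (rule real_sqrt_le_mono)
    then show ?thesis
      using \<eta>_pos by simp
  qed
  ultimately obtain j where "j \<le> r" "2 * j\<^sup>2 * T \<le> r * (n - r)" "4 + \<eta> * sqrt L / 128 \<le> real j"
    using exists_exchange_size[of r n T \<eta> L] n T \<eta>_pos by blast
  then show ?thesis
    using T n \<open>real (T ^ r) < real U\<close> unfolding key_parameters_def by (auto simp only: of_nat_less_iff)
qed

lemma exists_keys_cond_prob_ge:
  fixes k U p m :: nat
  assumes "\<kappa> = ln (real k)" "\<mu> = ln (real U)"
    and "prime p" "U < p" "0 < m" "m \<le> U" "1 \<le> k" "k < U"
  shows "\<exists>X. X \<subseteq> {1..<U} \<and> card X = k \<and>
    1 / (real m * real k) * exp (\<eta> * ln 2 / 128 * sqrt L) \<le> cond_prob p m X 0 0 0"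
proof -
  obtain r n T j where params: "key_parameters k U r n T j" and j: "4 + \<eta> * sqrt L / 128 \<le> real j"
    using exists_key_parameters[OF assms(1,2)] by blast
  obtain X where X: "X \<subseteq> {1..<U}" "card X = k"
    and cp: "2 ^ j / (16 * real m * real k) \<le> cond_prob p m X 0 0 0"
    using cond_prob_ge_prime_product_keys[OF assms(3-8) params] by blast
  have "1 / (real m * real k) * exp (\<eta> * ln 2 / 128 * sqrt L)
      = 16 * exp (\<eta> * sqrt L / 128 * ln 2) / (16 * real m * real k)"
    by (simp add: field_simps)
  also have "\<dots> \<le> 2 ^ j / (16 * real m * real k)"
    using sixteen_exp_le_two_pow[OF j] by (intro divide_right_mono) auto
  finally have "1 / (real m * real k) * exp (\<eta> * ln 2 / 128 * sqrt L) \<le> cond_prob p m X 0 0 0"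
    using cp by linarith
  then show ?thesis
    using X by blast
qed

end

lemma log_regime_eventually:
  fixes \<epsilon> :: real
  assumes "0 < \<epsilon>"
  shows "\<exists>K0. \<forall>k U :: nat. K0 \<le> k \<and> real k powr (1 + \<epsilon>) \<le> real U \<longrightarrow>
    log_regime (min \<epsilon> 1 / 8) (ln (real k)) (ln (real U)) \<and> 1 \<le> k \<and> k < U"
proof -
  define \<eta> where "\<eta> = min \<epsilon> 1 / 8"
  define \<Lambda> where "\<Lambda> = max (exp 16) ((16 * (640 / \<eta>)\<^sup>2)\<^sup>2)"
  have \<eta>: "0 < \<eta>" "\<eta> \<le> 1 / 8" "8 * \<eta> \<le> \<epsilon>"
    unfolding \<eta>_def using assms by auto
  have \<Lambda>: "exp 16 \<le> \<Lambda>" "(16 * (640 / \<eta>)\<^sup>2)\<^sup>2 \<le> \<Lambda>"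
    unfolding \<Lambda>_def by simp_all
  show ?thesis
  proof (intro exI[of _ "nat \<lceil>exp \<Lambda>\<rceil>"] allI impI)
    fix k U :: nat
    assume kU: "nat \<lceil>exp \<Lambda>\<rceil> \<le> k \<and> real k powr (1 + \<epsilon>) \<le> real U"
    have "exp \<Lambda> \<le> real (nat \<lceil>exp \<Lambda>\<rceil>)"
      by (rule real_nat_ceiling_ge)
    also have "\<dots> \<le> real k"
      using conjunct1[OF kU] by (simp only: of_nat_le_iff)
    finally have "exp \<Lambda> \<le> real k" .
    then have ln_k: "\<Lambda> \<le> ln (real k)"
      using exp_gt_zero[of \<Lambda>] by (subst ln_ge_iff) linarith+
    have "0 < \<Lambda>"
      using \<Lambda>(1) exp_gt_zero[of 16] by linarith
    then have "1 < exp \<Lambda>"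
      by simp
    then have "1 < real k"
      using \<open>exp \<Lambda> \<le> real k\<close> by linarith
    then have "k < U" "(1 + \<epsilon>) * ln (real k) \<le> ln (real U)"
      using assms kU less_and_ln_le_if_powr_le by auto
    moreover have "(1 + 8 * \<eta>) * ln (real k) \<le> (1 + \<epsilon>) * ln (real k)"
      using \<eta> \<open>1 < real k\<close> by (intro mult_right_mono) auto
    moreover have "exp 16 \<le> ln (real k)" "16 * (640 / \<eta>)\<^sup>2 \<le> sqrt (ln (real k))"
      using \<Lambda> ln_k by (auto intro: real_le_rsqrt)
    ultimately have "log_regime \<eta> (ln (real k)) (ln (real U))"
      using \<eta>(1,2) unfolding log_regime_def by auto
    then show "log_regime (min \<epsilon> 1 / 8) (ln (real k)) (ln (real U)) \<and> 1 \<le> k \<and> k < U"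
      using \<open>1 < real k\<close> \<open>k < U\<close> unfolding \<eta>_def by simp
  qed
qed

theorem theorem11p7:
  fixes \<epsilon> :: real
  assumes "\<epsilon> > 0"
  shows "\<exists>c > 0. \<exists>K0 :: nat. \<forall>(k :: nat) (U :: nat) (p :: nat) (m :: nat).
           k \<ge> K0 \<and> real U \<ge> real k powr (1 + \<epsilon>) \<and> prime p \<and> p > U \<and> 0 < m \<and> m \<le> U \<longrightarrow>
           (\<exists>X x a b. X \<subseteq> {..<U} \<and> card X = k \<and> x < U \<and> x \<notin> X \<and> a < m \<and> b < m \<and>
              cond_prob p m X x a b \<ge>
                1 / (real m * real k) *
                exp (c * sqrt (min (ln (real k) / ln (ln (real k)))
                                   (ln (real U) / (ln (ln (real U)))\<^sup>2))))"
proof -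
  define \<eta> where "\<eta> = min \<epsilon> 1 / 8"
  obtain K0 where K0: "\<And>k U :: nat. K0 \<le> k \<and> real k powr (1 + \<epsilon>) \<le> real U \<Longrightarrow>
      log_regime \<eta> (ln (real k)) (ln (real U)) \<and> 1 \<le> k \<and> k < U"
    using log_regime_eventually[OF assms] unfolding \<eta>_def by blast
  have "0 < \<eta> * ln 2 / 128"
    unfolding \<eta>_def using assms by simp
  moreover have "\<exists>X x a b. X \<subseteq> {..<U} \<and> card X = k \<and> x < U \<and> x \<notin> X \<and> a < m \<and> b < m \<and>
      1 / (real m * real k) * exp (\<eta> * ln 2 / 128 * sqrt (min (ln (real k) / ln (ln (real k)))
        (ln (real U) / (ln (ln (real U)))\<^sup>2))) \<le> cond_prob p m X x a b"
    if H: "K0 \<le> k \<and> real k powr (1 + \<epsilon>) \<le> real U \<and> prime p \<and> U < p \<and> 0 < m \<and> m \<le> U"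
    for k U p m :: nat
  proof -
    interpret log_regime \<eta> "ln (real k)" "ln (real U)"
      using K0[of k U] H by blast
    obtain X where "X \<subseteq> {1..<U}" "card X = k"
      "1 / (real m * real k) * exp (\<eta> * ln 2 / 128 * sqrt L) \<le> cond_prob p m X 0 0 0"
      using exists_keys_cond_prob_ge[of k U p m] K0[of k U] H by auto
    then show ?thesis
      using H unfolding L_def by (intro exI[of _ X] exI[of _ 0]) auto
  qed
  ultimately show ?thesis
    by blast
qed

end
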